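(* For every $\omega\in\Omega^*$, $W^*\chi_\omega=\varphi_\omega$, i.e. $\chi_\omega(Wf)=\varphi_\omega(f)$ for all $f\in L^{\infty}(\mathbb{R}_+^{\times})$.
   Context: $L^{\infty}(\mathbb{R}_+)$ and $L^{\infty}(\mathbb{R}_+^{\times})$ are the real-valued essentially bounded measurable functions on $[0,\infty)$ and $[1,\infty)$. $W:L^{\infty}(\mathbb{R}_+^{\times})\to L^{\infty}(\mathbb{R}_+)$, $(Wf)(x)=f(e^x)$, with adjoint $(W^*\chi)(f)=\chi(Wf)$. Let $\beta\mathbb{N}_0$ be the Stone–Čech compactification of $\mathbb{N}_0$ (points = ultrafilters), $\tau$ the extension of $n\mapsto n+1$, $\Omega=(\beta\mathbb{N}_0\times[0,1])/\sim$ with $(\tau\eta,0)\sim(\eta,1)$, containing $\mathbb{R}_+$ via $(n,t)\mapsto n+t$, $\Omega^*=\Omega\setminus\mathbb{R}_+$; each $\omega=(\eta,t)$ is identified with the ultrafilter $\{A+t:A\in\eta\}$ on $\mathbb{R}_+$, and $e^\omega=\{e^A:A\in\omega\}$ is an ultrafilter on $[1,\infty)$. Define $\chi_\omega(g)=\omega\text{-}\lim_xe^{-x}\int_0^xg(t)e^t\,dt$ for $g\in L^{\infty}(\mathbb{R}_+)$ and $\varphi_\omega(f)=e^\omega\text{-}\lim_x\frac1x\int_1^xf(t)\,dt$ for $f\in L^{\infty}(\mathbb{R}_+^{\times})$ (limits along ultrafilters). *)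

theory Defs
  imports "HOL-Analysis.Analysis"
begin

text \<open>Ultrafilters on the natural numbers (points of the Stone-Cech compactification).\<close>
definition is_ultrafilter :: "nat filter \<Rightarrow> bool" where
  "is_ultrafilter F \<longleftrightarrow> F \<noteq> bot \<and> (\<forall>P. eventually P F \<or> eventually (\<lambda>x. \<not> P x) F)"

text \<open>A point of the remainder: not a principal ultrafilter (no singleton belongs to it).\<close>
definition nonprincipal :: "nat filter \<Rightarrow> bool" where
  "nonprincipal F \<longleftrightarrow> (\<forall>n. \<not> eventually (\<lambda>k. k = n) F)"

text \<open>Representatives (eta, t) of points of Omega* = Omega minus R_+.\<close>
definition Omega_star :: "(nat filter \<times> real) set" where
  "Omega_star = {(\<eta>, t). is_ultrafilter \<eta> \<and> nonprincipal \<eta> \<and> t \<in> {0..1}}"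

definition omega_filter :: "nat filter \<times> real \<Rightarrow> real filter" where
  "omega_filter \<omega> = filtermap (\<lambda>n. real n + snd \<omega>) (fst \<omega>)"

definition exp_omega_filter :: "nat filter \<times> real \<Rightarrow> real filter" where
  "exp_omega_filter \<omega> = filtermap exp (omega_filter \<omega>)"

definition Linf_plus :: "(real \<Rightarrow> real) set" where
  "Linf_plus = {g. g \<in> borel_measurable (restrict_space lebesgue {0..}) \<and>
      (\<exists>C. AE x in lebesgue. x \<in> {0..} \<longrightarrow> \<bar>g x\<bar> \<le> C)}"

definition Linf_mult :: "(real \<Rightarrow> real) set" where
  "Linf_mult = {f. f \<in> borel_measurable (restrict_space lebesgue {1..}) \<and>
      (\<exists>C. AE x in lebesgue. x \<in> {1..} \<longrightarrow> \<bar>f x\<bar> \<le> C)}"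

definition W :: "(real \<Rightarrow> real) \<Rightarrow> (real \<Rightarrow> real)" where
  "W f = (\<lambda>x. f (exp x))"

definition chi :: "nat filter \<times> real \<Rightarrow> (real \<Rightarrow> real) \<Rightarrow> real" where
  "chi \<omega> g = Lim (omega_filter \<omega>)
      (\<lambda>x. exp (- x) * (LINT s:{0..x}|lebesgue. g s * exp s))"

definition phi :: "nat filter \<times> real \<Rightarrow> (real \<Rightarrow> real) \<Rightarrow> real" where
  "phi \<omega> f = Lim (exp_omega_filter \<omega>)
      (\<lambda>x. (1 / x) * (LINT s:{1..x}|lebesgue. f s))"

end

theory Submission
  imports Defs
begin

text \<open>The substitution \<open>x = exp u\<close> turns the exponentially weighted mean
  \<open>exp (-y) * \<integral>\<^sub>0\<^sup>y f (exp u) * exp u du\<close> of \<open>W f\<close> into the Cesaro mean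
  \<open>(1/x) * \<integral>\<^sub>1\<^sup>x f\<close> at \<open>x = exp y\<close>, for every \<open>y\<close>. Since \<open>e\<^sup>\<omega>\<close> is the image of
  \<open>\<omega>\<close> under \<open>exp\<close>, the two ultrafilter limits coincide.\<close>

lemma Lim_filtermap:
  fixes f :: "'a \<Rightarrow> 'b::t2_space"
  shows "Lim (filtermap g F) f = Lim F (\<lambda>x. f (g x))"
  unfolding Topological_Spaces.Lim_def by (simp add: filterlim_filtermap)

lemma exp_image_atLeastAtMost: "exp ` {a..b} = {exp a..exp (b::real)}"
proof
  show "{exp a..exp b} \<subseteq> exp ` {a..b}"
  proof
    fix x assume x: "x \<in> {exp a..exp b}"
    then have "x > 0" using exp_gt_zero[of a] by (meson atLeastAtMost_iff less_le_trans)
    with x have "ln x \<in> {a..b}"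
      by (metis atLeastAtMost_iff exp_gt_zero ln_exp ln_le_cancel_iff)
    with \<open>x > 0\<close> show "x \<in> exp ` {a..b}" by (metis exp_ln image_eqI)
  qed
qed auto

lemma set_integrable_Linf_mult:
  assumes "f \<in> Linf_mult"
  shows "set_integrable lebesgue {1..b} f"
proof -
  obtain C where meas: "f \<in> borel_measurable (restrict_space lebesgue {1..})"
    and bound: "AE x in lebesgue. x \<in> {1..} \<longrightarrow> \<bar>f x\<bar> \<le> C"
    using assms unfolding Linf_mult_def by auto
  have "set_borel_measurable lebesgue {1..} f"
    using meas unfolding set_borel_measurable_def
    by (subst (asm) borel_measurable_restrict_space_iff) auto
  then have meas_b: "set_borel_measurable lebesgue {1..b} f"
    by (rule set_borel_measurable_subset) auto
  have "set_integrable lebesgue {1..b} (\<lambda>_. C)"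
    by (rule absolutely_integrable_on_const) simp
  moreover note meas_b
  moreover have "AE x in lebesgue. x \<in> {1..b} \<longrightarrow> norm (f x) \<le> norm C"
    using bound by eventually_elim auto
  ultimately show ?thesis
    by (rule set_integrable_bound)
qed

lemma set_integral_exp_substitution:
  fixes f :: "real \<Rightarrow> real"
  assumes "set_integrable lebesgue {exp a..exp b} f"
  shows "(LINT u:{a..b}|lebesgue. f (exp u) * exp u) = (LINT x:{exp a..exp b}|lebesgue. f x)"
proof -
  have deriv: "(exp has_field_derivative exp u) (at u within {a..b})" for u
    by (auto intro: derivative_eq_intros)
  have inj: "inj_on exp {a..b}"
    by (simp add: inj_on_def)
  have "f absolutely_integrable_on exp ` {a..b}"
    using assms by (simp add: exp_image_atLeastAtMost)
  from has_absolute_integral_change_of_variables_1'[OF _ deriv inj, of f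
      "integral (exp ` {a..b}) f"] this
  have "(\<lambda>u. f (exp u) * exp u) absolutely_integrable_on {a..b}"
    and "integral {a..b} (\<lambda>u. f (exp u) * exp u) = integral {exp a..exp b} f"
    by (auto simp: mult.commute exp_image_atLeastAtMost)
  with assms show ?thesis
    by (simp add: set_lebesgue_integral_eq_integral)
qed

lemma exponential_mean_W_eq_Cesaro_mean:
  assumes "f \<in> Linf_mult"
  shows "exp (- y) * (LINT u:{0..y}|lebesgue. W f u * exp u)
      = (1 / exp y) * (LINT x:{1..exp y}|lebesgue. f x)"
  using set_integral_exp_substitution[of 0 y f] set_integrable_Linf_mult[OF assms]
  by (simp add: W_def exp_minus divide_inverse)

theorem theorem4p1:
  fixes \<omega> :: "nat filter \<times> real" and f :: "real \<Rightarrow> real"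
  assumes "\<omega> \<in> Omega_star" and "f \<in> Linf_mult"
  shows "chi \<omega> (W f) = phi \<omega> f"
  unfolding chi_def phi_def exp_omega_filter_def Lim_filtermap
    exponential_mean_W_eq_Cesaro_mean[OF assms(2)] ..

end
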